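(* Let $P<P'$ be priority forests in $\Pi(n)$. Then the Möbius function satisfies $$\mu(P,P')=\begin{cases}(-1)^{\rho(P')-\rho(P)}&\text{if }P'\text{ is a }P\text{-Boolean forest},\\ 0&\text{otherwise.}\end{cases}$$
   Context: $[n]_0=\{0,\dots,n\}$. A priority forest on $[n]_0$ is a rooted forest with vertex set $[n]_0$ whose component trees $T_0,T_1,\dots$ are increasing (each non-root vertex has a larger label than its parent) and satisfy: for $j<k$ every label of $T_j$ is smaller than every label of $T_k$. The priority lattice $\Pi(n)$ is the set of priority forests on $[n]_0$ ordered by inclusion of edge sets, together with an extra top element $\hat1$. The rank of a priority forest is $\rho(P)=|E(P)|$. For priority forests $P<P'$, an edge $e\in E(P')\setminus E(P)$ is $P$-removable if deleting $e$ from $P'$ yields a priority forest (the forest's components are re-indexed by their root labels). $P'$ is a $P$-Boolean forest if every edge of $E(P')\setminus E(P)$ is $P$-removable. *)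

theory Defs
  imports Main
begin

text \<open>Vertex set [n]_0 = {0..n}. A forest on [n]_0 is given by its set of directed
  edges (parent, child).\<close>

definition vset :: "nat \<Rightarrow> nat set" where
  "vset n = {0..n}"

definition conn :: "(nat \<times> nat) set \<Rightarrow> (nat \<times> nat) set" where
  "conn E = (E \<union> E\<inverse>)\<^sup>*"

text \<open>Priority forest: a rooted forest on [n]_0 (every vertex has at most one parent;
  vertices without a parent are roots), all trees increasing (child label > parent label),
  and for any two distinct components, all labels of one are smaller than all labels
  of the other (so components can be listed T_0, T_1, ... with label sets ordered).\<close>
definition priority_forest :: "nat \<Rightarrow> (nat \<times> nat) set \<Rightarrow> bool" where
  "priority_forest n E \<longleftrightarrow>
     E \<subseteq> vset n \<times> vset n \<and>
     (\<forall>(p, c) \<in> E. p < c) \<and>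
     (\<forall>p q c. (p, c) \<in> E \<and> (q, c) \<in> E \<longrightarrow> p = q) \<and>
     (\<forall>u \<in> vset n. \<forall>v \<in> vset n. (u, v) \<notin> conn E \<longrightarrow>
        (\<forall>x \<in> vset n. \<forall>y \<in> vset n. (u, x) \<in> conn E \<and> (v, y) \<in> conn E \<longrightarrow> x < y) \<or>
        (\<forall>x \<in> vset n. \<forall>y \<in> vset n. (u, x) \<in> conn E \<and> (v, y) \<in> conn E \<longrightarrow> y < x))"

text \<open>Elements of the priority lattice: Some E for a priority forest E, None for the
  adjoined top element.\<close>
definition pi_carrier :: "nat \<Rightarrow> (nat \<times> nat) set option set" where
  "pi_carrier n = Some ` {E. priority_forest n E} \<union> {None}"

definition pi_le :: "(nat \<times> nat) set option \<Rightarrow> (nat \<times> nat) set option \<Rightarrow> bool" where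
  "pi_le x y = (case y of None \<Rightarrow> True
                 | Some F \<Rightarrow> (case x of None \<Rightarrow> False | Some E \<Rightarrow> E \<subseteq> F))"

definition is_moebius :: "'a set \<Rightarrow> ('a \<Rightarrow> 'a \<Rightarrow> bool) \<Rightarrow> ('a \<Rightarrow> 'a \<Rightarrow> int) \<Rightarrow> bool" where
  "is_moebius A le f \<longleftrightarrow>
     (\<forall>x y. (x \<notin> A \<or> y \<notin> A) \<longrightarrow> f x y = 0) \<and>
     (\<forall>x \<in> A. \<forall>y \<in> A. f x y =
        (if x = y then 1
         else if le x y then - (\<Sum>z \<in> {z \<in> A. le x z \<and> le z y \<and> z \<noteq> y}. f x z)
         else 0))"

definition moebius :: "'a set \<Rightarrow> ('a \<Rightarrow> 'a \<Rightarrow> bool) \<Rightarrow> 'a \<Rightarrow> 'a \<Rightarrow> int" where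
  "moebius A le = (THE f. is_moebius A le f)"

definition rank :: "(nat \<times> nat) set \<Rightarrow> nat" where
  "rank E = card E"

definition removable :: "nat \<Rightarrow> (nat \<times> nat) set \<Rightarrow> (nat \<times> nat) set \<Rightarrow> nat \<times> nat \<Rightarrow> bool" where
  "removable n P P' e \<longleftrightarrow> e \<in> P' - P \<and> priority_forest n (P' - {e})"

definition boolean_forest :: "nat \<Rightarrow> (nat \<times> nat) set \<Rightarrow> (nat \<times> nat) set \<Rightarrow> bool" where
  "boolean_forest n P P' \<longleftrightarrow> (\<forall>e \<in> P' - P. removable n P P' e)"

end

theory Submission
  imports Defs
begin

text \<open>By the defining recursion of the Moebius function it suffices that the claimed values
  sum to zero over every nontrivial interval [P, Q]. An increasing forest is a priority forest
  iff no edge (p, c) jumps over a root r, i.e. p < r < c. Since deleting edges of Q makes their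
  children new roots, a forest R between P and Q is a priority forest iff no edge of R jumps
  over the child of an edge of Q - R. Consequently the P-Boolean forests in [P, Q] are exactly
  the forests P \<union> S with S ranging over the subsets of the set of edges of Q - P that jump over
  no child of an edge of Q - P. That set is nonempty (it contains the edge of Q - P with the
  smallest child), so the alternating sum over its subsets vanishes.\<close>

locale finite_partial_order =
  fixes A :: "'a set" and le :: "'a \<Rightarrow> 'a \<Rightarrow> bool"
  assumes finite_carrier: "finite A"
    and reflexive: "x \<in> A \<Longrightarrow> le x x"
    and transitive: "x \<in> A \<Longrightarrow> y \<in> A \<Longrightarrow> z \<in> A \<Longrightarrow> le x y \<Longrightarrow> le y z \<Longrightarrow> le x z"
    and antisymmetric: "x \<in> A \<Longrightarrow> y \<in> A \<Longrightarrow> le x y \<Longrightarrow> le y x \<Longrightarrow> x = y"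
begin

definition less_rel :: "('a \<times> 'a) set" where
  "less_rel = {(z, y). z \<in> A \<and> y \<in> A \<and> le z y \<and> z \<noteq> y}"

lemma wf_less_rel: "wf less_rel"
proof (rule finite_acyclic_wf)
  show "finite less_rel"
    by (rule finite_subset[of _ "A \<times> A"]) (auto simp: less_rel_def finite_carrier)
  have "trans less_rel"
    by (rule transI) (auto simp: less_rel_def intro: transitive dest: antisymmetric)
  then show "acyclic less_rel"
    by (simp add: acyclic_def) (simp add: less_rel_def)
qed

lemma ex_is_moebius: "\<exists>f. is_moebius A le f"
proof
  define F where "F x g y = (if x \<notin> A \<or> y \<notin> A then 0 else if x = y then 1
      else if le x y then - (\<Sum>z \<in> {z \<in> A. le x z \<and> le z y \<and> z \<noteq> y}. g z) else 0)"
    for x :: 'a and g :: "'a \<Rightarrow> int" and y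
  define f where "f x = wfrec less_rel (F x)" for x
  have "f x y = F x (f x) y" for x y
  proof -
    have "f x y = F x (cut (f x) less_rel y) y"
      unfolding f_def by (rule wfrec[OF wf_less_rel])
    also have "\<dots> = F x (f x) y"
      unfolding F_def by (intro if_cong refl arg_cong[where f = uminus] sum.cong)
        (auto simp: cut_apply less_rel_def)
    finally show ?thesis .
  qed
  then show "is_moebius A le f"
    unfolding is_moebius_def by (simp add: F_def)
qed

lemma is_moebius_unique:
  assumes f: "is_moebius A le f" and g: "is_moebius A le g"
  shows "f = g"
proof (intro ext)
  fix x y
  show "f x y = g x y"
  proof (induction y rule: wf_induct_rule[OF wf_less_rel])
    case (1 y)
    have "(\<Sum>z \<in> {z \<in> A. le x z \<and> le z y \<and> z \<noteq> y}. f x z)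
        = (\<Sum>z \<in> {z \<in> A. le x z \<and> le z y \<and> z \<noteq> y}. g x z)" if "y \<in> A"
      using 1 that by (intro sum.cong) (auto simp: less_rel_def)
    then show ?case
      using f g unfolding is_moebius_def by (cases "x \<in> A \<and> y \<in> A") auto
  qed
qed

lemma is_moebius_moebius: "is_moebius A le (moebius A le)"
  unfolding moebius_def
  by (rule theI'[of "is_moebius A le"]) (use ex_is_moebius is_moebius_unique in blast)

lemma moebius_eqI:
  assumes x: "x \<in> A" and w: "w \<in> A" "le x w" and h_x: "h x = 1"
    and h_sum: "\<And>y. y \<in> A \<Longrightarrow> le x y \<Longrightarrow> le y w \<Longrightarrow> y \<noteq> x \<Longrightarrow>
      (\<Sum>z \<in> {z \<in> A. le x z \<and> le z y}. h z) = 0"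
  shows "moebius A le x w = h w"
proof -
  have "y \<in> A \<Longrightarrow> le x y \<Longrightarrow> le y w \<Longrightarrow> moebius A le x y = h y" for y
  proof (induction y rule: wf_induct_rule[OF wf_less_rel])
    case (1 y)
    define below where "below = {z \<in> A. le x z \<and> le z y \<and> z \<noteq> y}"
    have rec: "moebius A le x y = (if x = y then 1 else - (\<Sum>z \<in> below. moebius A le x z))"
      using is_moebius_moebius x 1(2,3) unfolding is_moebius_def below_def by simp
    show ?case
    proof (cases "y = x")
      case True
      then show ?thesis using rec h_x by simp
    next
      case False
      have IH: "moebius A le x z = h z" if "z \<in> below" for z
        using 1 that w transitive unfolding below_def less_rel_def by blast
      have "{z \<in> A. le x z \<and> le z y} = insert y below"
        using 1(2,3) reflexive unfolding below_def by blast
      then have "h y + (\<Sum>z \<in> below. h z) = 0"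
        using h_sum[OF 1(2-4) False] finite_carrier by (simp add: below_def)
      then show ?thesis
        using rec False IH by (simp add: sum.cong[OF refl IH] eq_neg_iff_add_eq_0)
    qed
  qed
  then show ?thesis using w reflexive by blast
qed

end

definition increasing_forest :: "nat \<Rightarrow> (nat \<times> nat) set \<Rightarrow> bool" where
  "increasing_forest n E \<longleftrightarrow>
     E \<subseteq> vset n \<times> vset n \<and>
     (\<forall>(p, c) \<in> E. p < c) \<and>
     (\<forall>p q c. (p, c) \<in> E \<and> (q, c) \<in> E \<longrightarrow> p = q)"

definition jumps_over :: "nat \<times> nat \<Rightarrow> nat \<Rightarrow> bool" where
  "jumps_over e v \<longleftrightarrow> fst e < v \<and> v < snd e"

lemma increasing_forest_subset:
  "increasing_forest n Q \<Longrightarrow> R \<subseteq> Q \<Longrightarrow> increasing_forest n R"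
  unfolding increasing_forest_def by blast

lemma conn_refl: "(x, x) \<in> conn E"
  unfolding conn_def by simp

lemma conn_sym: "(x, y) \<in> conn E \<Longrightarrow> (y, x) \<in> conn E"
  unfolding conn_def by (rule symD[OF sym_rtrancl[OF sym_Un_converse]])

lemma conn_trans: "(x, y) \<in> conn E \<Longrightarrow> (y, z) \<in> conn E \<Longrightarrow> (x, z) \<in> conn E"
  unfolding conn_def by (rule rtrancl_trans)

lemma conn_edge: "(p, c) \<in> E \<Longrightarrow> (p, c) \<in> conn E"
  unfolding conn_def by auto

lemma conn_invariant:
  assumes "\<And>p c. (p, c) \<in> E \<Longrightarrow> \<Phi> p \<longleftrightarrow> \<Phi> c" and "(x, y) \<in> conn E"
  shows "\<Phi> x \<longleftrightarrow> \<Phi> y"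
  using assms(2) unfolding conn_def
  by (induction rule: rtrancl_induct) (auto dest: assms(1))

lemma rtrancl_increasing_le:
  fixes E :: "(nat \<times> nat) set"
  assumes "\<forall>(p, c) \<in> E. p < c" and "(x, y) \<in> E\<^sup>*"
  shows "x \<le> y"
  using assms(2)
proof (induction rule: rtrancl_induct)
  case (step y z)
  have "y < z" using assms(1) step.hyps(2) by blast
  with step.IH show ?case by simp
qed simp

lemma conn_from_root_rtrancl:
  assumes up: "\<forall>p q c. (p, c) \<in> E \<and> (q, c) \<in> E \<longrightarrow> p = q"
    and root: "r \<notin> Range E" and "(r, y) \<in> conn E"
  shows "(r, y) \<in> E\<^sup>*"
  using assms(3) unfolding conn_def
proof (induction rule: rtrancl_induct)
  case (step y z)
  then consider "(y, z) \<in> E" | "(z, y) \<in> E" by blast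
  then show ?case
  proof cases
    case 1
    then show ?thesis using step.IH by simp
  next
    case 2
    then have "(r, y) \<in> E\<^sup>+"
      using step.IH root by (auto simp: rtrancl_eq_or_trancl)
    then obtain w where "(r, w) \<in> E\<^sup>*" "(w, y) \<in> E" by (meson tranclD2)
    with 2 up show ?thesis by blast
  qed
qed simp

lemma increasing_forest_root_le:
  assumes forest: "increasing_forest n E" and "r \<notin> Range E" and "(r, y) \<in> conn E"
  shows "r \<le> y"
proof (rule rtrancl_increasing_le)
  show "\<forall>(p, c) \<in> E. p < c" using forest unfolding increasing_forest_def by blast
  have "\<forall>p q c. (p, c) \<in> E \<and> (q, c) \<in> E \<longrightarrow> p = q"
    using forest unfolding increasing_forest_def by blast
  then show "(r, y) \<in> E\<^sup>*" using conn_from_root_rtrancl assms(2,3) by blast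
qed

lemma exists_root_below:
  fixes E :: "(nat \<times> nat) set"
  assumes "\<forall>(p, c) \<in> E. p < c"
  shows "\<exists>r. r \<notin> Range E \<and> r \<le> u \<and> (u, r) \<in> conn E"
proof (induction u rule: less_induct)
  case (less u)
  show ?case
  proof (cases "u \<in> Range E")
    case False
    then show ?thesis using conn_refl by blast
  next
    case True
    then obtain q where q: "(q, u) \<in> E" by blast
    with assms have "q < u" by blast
    with less.IH obtain r where r: "r \<notin> Range E" "r \<le> q" "(q, r) \<in> conn E" by blast
    have "(u, r) \<in> conn E" using conn_trans[OF conn_sym[OF conn_edge[OF q]] r(3)] .
    with r \<open>q < u\<close> show ?thesis by auto
  qed
qed

lemma conn_below_unjumped_root:
  assumes inc: "\<forall>(p, c) \<in> E. p < c" and root: "r \<notin> Range E"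
    and no_jump: "\<forall>e \<in> E. \<not> jumps_over e r" and "(x, y) \<in> conn E"
  shows "x < r \<longleftrightarrow> y < r"
proof (rule conn_invariant[OF _ assms(4)])
  fix p c assume pc: "(p, c) \<in> E"
  have "p < c" using inc pc by blast
  moreover have "c \<noteq> r" using root pc by blast
  moreover have "\<not> jumps_over (p, c) r" using no_jump pc by blast
  ultimately show "p < r \<longleftrightarrow> c < r" unfolding jumps_over_def by auto
qed

lemma priority_forest_imp_increasing_forest:
  "priority_forest n E \<Longrightarrow> increasing_forest n E"
  unfolding priority_forest_def increasing_forest_def by blast

lemma priority_forest_components_ordered:
  assumes "priority_forest n E" "u \<in> vset n" "v \<in> vset n" "(u, v) \<notin> conn E"
  shows "(\<forall>x \<in> vset n. \<forall>y \<in> vset n. (u, x) \<in> conn E \<and> (v, y) \<in> conn E \<longrightarrow> x < y) \<or>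
         (\<forall>x \<in> vset n. \<forall>y \<in> vset n. (u, x) \<in> conn E \<and> (v, y) \<in> conn E \<longrightarrow> y < x)"
  using assms unfolding priority_forest_def by blast

lemma priority_forestI:
  assumes "increasing_forest n E"
    and "\<And>u v. u \<in> vset n \<Longrightarrow> v \<in> vset n \<Longrightarrow> (u, v) \<notin> conn E \<Longrightarrow>
      (\<forall>x \<in> vset n. \<forall>y \<in> vset n. (u, x) \<in> conn E \<and> (v, y) \<in> conn E \<longrightarrow> x < y) \<or>
      (\<forall>x \<in> vset n. \<forall>y \<in> vset n. (u, x) \<in> conn E \<and> (v, y) \<in> conn E \<longrightarrow> y < x)"
  shows "priority_forest n E"
  using assms unfolding priority_forest_def increasing_forest_def by blast

lemma priority_forest_no_jump_over_root:
  assumes pf: "priority_forest n E" and e: "e \<in> E" and r: "r \<in> vset n" "r \<notin> Range E"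
  shows "\<not> jumps_over e r"
proof
  assume jump: "jumps_over e r"
  obtain p c where pc: "e = (p, c)" by fastforce
  have forest: "increasing_forest n E" using priority_forest_imp_increasing_forest[OF pf] .
  then have pv: "p \<in> vset n" "c \<in> vset n" using e pc unfolding increasing_forest_def by auto
  show False
  proof (cases "(p, r) \<in> conn E")
    case True
    then have "r \<le> p" using increasing_forest_root_le[OF forest r(2)] conn_sym by blast
    then show False using jump pc by (simp add: jumps_over_def)
  next
    case False
    from priority_forest_components_ordered[OF pf pv(1) r(1) False]
    show False
    proof
      assume "\<forall>x \<in> vset n. \<forall>y \<in> vset n. (p, x) \<in> conn E \<and> (r, y) \<in> conn E \<longrightarrow> x < y"
      then have "c < r" using pv r(1) conn_edge e pc conn_refl by blast
      then show False using jump pc by (simp add: jumps_over_def)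
    next
      assume "\<forall>x \<in> vset n. \<forall>y \<in> vset n. (p, x) \<in> conn E \<and> (r, y) \<in> conn E \<longrightarrow> y < x"
      then have "r < p" using pv r(1) conn_refl by blast
      then show False using jump pc by (simp add: jumps_over_def)
    qed
  qed
qed

lemma priority_forest_if_no_jump_over_root:
  assumes forest: "increasing_forest n E"
    and no_jump: "\<And>r. r \<in> vset n \<Longrightarrow> r \<notin> Range E \<Longrightarrow> \<forall>e \<in> E. \<not> jumps_over e r"
  shows "priority_forest n E"
proof (rule priority_forestI[OF forest])
  have inc: "\<forall>(p, c) \<in> E. p < c" using forest unfolding increasing_forest_def by blast
  \<comment> \<open>No edge jumps over the larger root, so it cuts between the two components.\<close>
  have separated: "\<forall>x y. (u, x) \<in> conn E \<and> (v, y) \<in> conn E \<longrightarrow> x < y"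
    if ru: "(u, ru) \<in> conn E" "ru < rv" and rv: "rv \<in> vset n" "rv \<notin> Range E" "(v, rv) \<in> conn E"
    for u v ru rv
  proof (intro allI impI, elim conjE)
    note below = conn_below_unjumped_root[OF inc rv(2) no_jump[OF rv(1,2)]]
    fix x y assume x: "(u, x) \<in> conn E" and y: "(v, y) \<in> conn E"
    have "x < rv" using below[OF conn_trans[OF conn_sym[OF ru(1)] x]] ru(2) by simp
    moreover have "\<not> y < rv" using below[OF conn_trans[OF conn_sym[OF rv(3)] y]] by simp
    ultimately show "x < y" by simp
  qed
  fix u v assume uv: "u \<in> vset n" "v \<in> vset n" "(u, v) \<notin> conn E"
  obtain ru where ru: "ru \<notin> Range E" "ru \<le> u" "(u, ru) \<in> conn E"
    using exists_root_below[OF inc] by blast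
  obtain rv where rv: "rv \<notin> Range E" "rv \<le> v" "(v, rv) \<in> conn E"
    using exists_root_below[OF inc] by blast
  have vset: "ru \<in> vset n" "rv \<in> vset n" using ru(2) rv(2) uv(1,2) by (auto simp: vset_def)
  have "ru \<noteq> rv"
  proof
    assume "ru = rv"
    then have "(u, v) \<in> conn E" using conn_trans[OF ru(3)] conn_sym[OF rv(3)] by simp
    with uv(3) show False ..
  qed
  then consider "ru < rv" | "rv < ru" by linarith
  then show "(\<forall>x \<in> vset n. \<forall>y \<in> vset n. (u, x) \<in> conn E \<and> (v, y) \<in> conn E \<longrightarrow> x < y) \<or>
      (\<forall>x \<in> vset n. \<forall>y \<in> vset n. (u, x) \<in> conn E \<and> (v, y) \<in> conn E \<longrightarrow> y < x)"
  proof cases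
    case 1
    then show ?thesis using separated[OF ru(3) 1 vset(2) rv(1,3)] by blast
  next
    case 2
    then show ?thesis using separated[OF rv(3) 2 vset(1) ru(1,3)] by blast
  qed
qed

lemma priority_forest_iff:
  "priority_forest n E \<longleftrightarrow>
     increasing_forest n E \<and> (\<forall>e \<in> E. \<forall>r \<in> vset n - Range E. \<not> jumps_over e r)"
  using priority_forest_imp_increasing_forest priority_forest_no_jump_over_root
    priority_forest_if_no_jump_over_root by blast

lemma finite_priority_forest:
  assumes "priority_forest n E"
  shows "finite E"
proof (rule finite_subset)
  show "E \<subseteq> vset n \<times> vset n" using assms unfolding priority_forest_def by blast
qed (simp add: vset_def)

lemma roots_subforest:
  assumes forest: "increasing_forest n Q" and RQ: "R \<subseteq> Q"
  shows "vset n - Range R = (vset n - Range Q) \<union> snd ` (Q - R)"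
proof (intro equalityI subsetI)
  fix r assume r: "r \<in> vset n - Range R"
  show "r \<in> (vset n - Range Q) \<union> snd ` (Q - R)"
  proof (cases "r \<in> Range Q")
    case True
    then obtain p where "(p, r) \<in> Q" by blast
    with r have "(p, r) \<in> Q - R" by blast
    then have "r \<in> snd ` (Q - R)" by (metis image_eqI snd_conv)
    then show ?thesis by blast
  qed (use r in blast)
next
  fix r assume "r \<in> (vset n - Range Q) \<union> snd ` (Q - R)"
  then consider "r \<in> vset n - Range Q" | p where "(p, r) \<in> Q - R" by force
  then show "r \<in> vset n - Range R"
  proof cases
    case 1
    then show ?thesis using RQ by blast
  next
    case (2 p)
    have "r \<in> vset n" using 2 forest unfolding increasing_forest_def by blast
    moreover have "r \<notin> Range R"
    proof
      assume "r \<in> Range R"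
      then obtain q where "(q, r) \<in> R" by blast
      moreover have "q = p" using calculation 2 RQ forest unfolding increasing_forest_def by blast
      ultimately show False using 2 by blast
    qed
    ultimately show ?thesis by blast
  qed
qed

lemma priority_subforest_iff:
  assumes Q: "priority_forest n Q" and RQ: "R \<subseteq> Q"
  shows "priority_forest n R \<longleftrightarrow> (\<forall>g \<in> R. \<forall>f \<in> Q - R. \<not> jumps_over g (snd f))"
proof -
  have forest: "increasing_forest n Q" "increasing_forest n R"
    using priority_forest_imp_increasing_forest[OF Q] increasing_forest_subset RQ by blast+
  have old_roots: "\<forall>g \<in> R. \<forall>r \<in> vset n - Range Q. \<not> jumps_over g r"
    using Q RQ unfolding priority_forest_iff by blast
  have "priority_forest n R \<longleftrightarrow> (\<forall>g \<in> R. \<forall>r \<in> vset n - Range R. \<not> jumps_over g r)"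
    using priority_forest_iff forest(2) by blast
  also have "\<dots> \<longleftrightarrow> (\<forall>g \<in> R. \<forall>r \<in> snd ` (Q - R). \<not> jumps_over g r)"
    unfolding roots_subforest[OF forest(1) RQ] using old_roots by blast
  also have "\<dots> \<longleftrightarrow> (\<forall>g \<in> R. \<forall>f \<in> Q - R. \<not> jumps_over g (snd f))"
    by blast
  finally show ?thesis .
qed

definition boolean_edges :: "(nat \<times> nat) set \<Rightarrow> (nat \<times> nat) set \<Rightarrow> (nat \<times> nat) set" where
  "boolean_edges P Q = {e \<in> Q - P. \<forall>f \<in> Q - P. \<not> jumps_over e (snd f)}"

lemma priority_forest_union_boolean_edges:
  assumes P: "priority_forest n P" and Q: "priority_forest n Q" and "P \<subseteq> Q"
    and S: "S \<subseteq> boolean_edges P Q"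
  shows "priority_forest n (P \<union> S)"
proof -
  have "\<forall>g \<in> P. \<forall>f \<in> Q - P. \<not> jumps_over g (snd f)"
    using priority_subforest_iff[OF Q \<open>P \<subseteq> Q\<close>] P by blast
  moreover have "P \<union> S \<subseteq> Q" using S \<open>P \<subseteq> Q\<close> unfolding boolean_edges_def by blast
  ultimately show ?thesis
    using S priority_subforest_iff[OF Q] unfolding boolean_edges_def by blast
qed

lemma boolean_forest_union_boolean_edges:
  assumes P: "priority_forest n P" and Q: "priority_forest n Q" and "P \<subseteq> Q"
    and S: "S \<subseteq> boolean_edges P Q"
  shows "boolean_forest n P (P \<union> S)"
  unfolding boolean_forest_def removable_def
proof
  fix e assume e: "e \<in> P \<union> S - P"
  then have "P \<union> S - {e} = P \<union> (S - {e})" by blast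
  moreover have "S - {e} \<subseteq> boolean_edges P Q" using S by blast
  ultimately have "priority_forest n (P \<union> S - {e})"
    using priority_forest_union_boolean_edges[OF P Q \<open>P \<subseteq> Q\<close>] by simp
  with e show "e \<in> P \<union> S - P \<and> priority_forest n (P \<union> S - {e})" by blast
qed

lemma boolean_forest_diff_subset_boolean_edges:
  assumes Q: "priority_forest n Q" and R: "priority_forest n R" and "P \<subseteq> R" "R \<subseteq> Q"
    and bool: "boolean_forest n P R"
  shows "R - P \<subseteq> boolean_edges P Q"
proof
  fix e assume e: "e \<in> R - P"
  have "\<not> jumps_over e (snd f)" if f: "f \<in> Q - P" for f
  proof
    assume jump: "jumps_over e (snd f)"
    have "f \<in> R" using priority_subforest_iff[OF Q \<open>R \<subseteq> Q\<close>] R e f jump by blast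
    moreover have "e \<noteq> f" using jump by (auto simp: jumps_over_def)
    moreover have "priority_forest n (R - {f})"
      using bool \<open>f \<in> R\<close> f unfolding boolean_forest_def removable_def by blast
    ultimately show False
      using priority_subforest_iff[OF Q, of "R - {f}"] \<open>R \<subseteq> Q\<close> e f jump by blast
  qed
  with e \<open>R \<subseteq> Q\<close> show "e \<in> boolean_edges P Q" unfolding boolean_edges_def by blast
qed

text \<open>An edge of Q - P whose child is minimal jumps over no other child.\<close>
lemma boolean_edges_nonempty:
  assumes "P \<subset> Q"
  shows "boolean_edges P Q \<noteq> {}"
proof -
  have "\<exists>m. \<exists>e \<in> Q - P. snd e = m" using assms by blast
  then obtain e where e: "e \<in> Q - P" and least: "\<And>m. m < snd e \<Longrightarrow> \<not> (\<exists>e' \<in> Q - P. snd e' = m)"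
    unfolding exists_least_iff[of "\<lambda>m. \<exists>e \<in> Q - P. snd e = m"] by blast
  have "e \<in> boolean_edges P Q"
    using e least unfolding boolean_edges_def jumps_over_def by blast
  then show ?thesis by blast
qed

lemma boolean_forests_between:
  assumes P: "priority_forest n P" and Q: "priority_forest n Q" and "P \<subseteq> Q"
  shows "{R. priority_forest n R \<and> P \<subseteq> R \<and> R \<subseteq> Q \<and> boolean_forest n P R}
    = (\<union>) P ` Pow (boolean_edges P Q)"
proof (intro equalityI subsetI)
  fix R assume "R \<in> {R. priority_forest n R \<and> P \<subseteq> R \<and> R \<subseteq> Q \<and> boolean_forest n P R}"
  then have R: "priority_forest n R" "P \<subseteq> R" "R \<subseteq> Q" "boolean_forest n P R" by blast+
  have "R = P \<union> (R - P)" using R(2) by blast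
  moreover have "R - P \<subseteq> boolean_edges P Q"
    using boolean_forest_diff_subset_boolean_edges[OF Q R(1-4)] .
  ultimately show "R \<in> (\<union>) P ` Pow (boolean_edges P Q)" by blast
next
  fix R assume "R \<in> (\<union>) P ` Pow (boolean_edges P Q)"
  then obtain S where S: "S \<subseteq> boolean_edges P Q" and R: "R = P \<union> S" by blast
  have "S \<subseteq> Q" using S unfolding boolean_edges_def by blast
  then show "R \<in> {R. priority_forest n R \<and> P \<subseteq> R \<and> R \<subseteq> Q \<and> boolean_forest n P R}"
    using R S \<open>P \<subseteq> Q\<close> priority_forest_union_boolean_edges[OF P Q]
      boolean_forest_union_boolean_edges[OF P Q] by blast
qed

lemma sum_Pow_neg_one_power_card:
  assumes "finite X" "X \<noteq> {}"
  shows "(\<Sum>S \<in> Pow X. (-1) ^ card S) = (0 :: 'a :: comm_ring_1)"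
  using prod_diff_conv_sum[OF assms(1), of "\<lambda>_. 1" "\<lambda>_. 1"] assms
  by (simp add: power_0_left)

lemma sum_boolean_forests_between:
  assumes P: "priority_forest n P" and Q: "priority_forest n Q" and "P \<subset> Q"
  shows "(\<Sum>R \<in> {R. priority_forest n R \<and> P \<subseteq> R \<and> R \<subseteq> Q}.
      if boolean_forest n P R then (-1) ^ (rank R - rank P) else 0) = (0 :: int)"
proof -
  define X where "X = boolean_edges P Q"
  have "P \<subseteq> Q" using \<open>P \<subset> Q\<close> by blast
  have "finite Q" using finite_priority_forest[OF Q] .
  then have fin: "finite {R. priority_forest n R \<and> P \<subseteq> R \<and> R \<subseteq> Q}" "finite X" "finite P"
    using \<open>P \<subset> Q\<close> finite_subset[of _ Q] finite_subset[of _ "Pow Q"]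
    unfolding X_def boolean_edges_def by auto
  have disjoint: "S \<inter> P = {}" if "S \<subseteq> X" for S
    using that unfolding X_def boolean_edges_def by blast
  have "(\<Sum>R \<in> {R. priority_forest n R \<and> P \<subseteq> R \<and> R \<subseteq> Q}.
      if boolean_forest n P R then (-1::int) ^ (rank R - rank P) else 0)
    = (\<Sum>R \<in> {R. priority_forest n R \<and> P \<subseteq> R \<and> R \<subseteq> Q \<and> boolean_forest n P R}.
        (-1) ^ (rank R - rank P))"
    using fin(1) by (simp add: sum.inter_filter[symmetric])
  also have "\<dots> = (\<Sum>S \<in> Pow X. (-1) ^ (rank (P \<union> S) - rank P))"
  proof (unfold boolean_forests_between[OF P Q \<open>P \<subseteq> Q\<close>] X_def[symmetric], rule sum.reindex_cong)
    show "inj_on ((\<union>) P) (Pow X)"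
      by (rule inj_onI) (use disjoint in blast)
  qed simp_all
  also have "\<dots> = (\<Sum>S \<in> Pow X. (-1) ^ card S)"
  proof (rule sum.cong[OF refl])
    fix S assume "S \<in> Pow X"
    then have "S \<subseteq> X" by simp
    have "finite S" using \<open>S \<subseteq> X\<close> fin(2) by (rule finite_subset)
    moreover have "P \<inter> S = {}" using disjoint[OF \<open>S \<subseteq> X\<close>] by blast
    ultimately have "rank (P \<union> S) = rank P + card S" using fin(3) by (simp add: rank_def card_Un_disjoint)
    then show "(-1) ^ (rank (P \<union> S) - rank P) = (-1) ^ card S" by simp
  qed
  also have "\<dots> = 0"
  proof (rule sum_Pow_neg_one_power_card[OF fin(2)])
    show "X \<noteq> {}" unfolding X_def using \<open>P \<subset> Q\<close> by (rule boolean_edges_nonempty)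
  qed
  finally show ?thesis .
qed

lemma finite_partial_order_pi: "finite_partial_order (pi_carrier n) pi_le"
proof
  have "{E. priority_forest n E} \<subseteq> Pow (vset n \<times> vset n)"
    unfolding priority_forest_def by blast
  then have "finite {E. priority_forest n E}"
    by (rule finite_subset) (simp add: vset_def)
  then show "finite (pi_carrier n)" unfolding pi_carrier_def by simp
qed (auto simp: pi_le_def split: option.splits)

lemma pi_carrier_interval:
  "{z \<in> pi_carrier n. pi_le (Some P) z \<and> pi_le z (Some Q)}
    = Some ` {R. priority_forest n R \<and> P \<subseteq> R \<and> R \<subseteq> Q}"
  unfolding pi_carrier_def pi_le_def by (auto split: option.splits)

theorem lemma5p11:
  fixes n :: nat and P P' :: "(nat \<times> nat) set"
  assumes "priority_forest n P" and "priority_forest n P'" and "P \<subset> P'"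
  shows "moebius (pi_carrier n) pi_le (Some P) (Some P') =
    (if boolean_forest n P P' then (-1) ^ (rank P' - rank P) else 0)"
proof -
  interpret finite_partial_order "pi_carrier n" pi_le by (rule finite_partial_order_pi)
  \<comment> \<open>The value at the adjoined top None is irrelevant: only the interval
    [Some P, Some P'] is used.\<close>
  define h where "h z = (case z of None \<Rightarrow> 0
    | Some R \<Rightarrow> if boolean_forest n P R then (-1) ^ (rank R - rank P) else (0 :: int))" for z
  have "moebius (pi_carrier n) pi_le (Some P) (Some P') = h (Some P')"
  proof (rule moebius_eqI)
    show "Some P \<in> pi_carrier n" "Some P' \<in> pi_carrier n"
      using assms(1,2) unfolding pi_carrier_def by blast+
    show "pi_le (Some P) (Some P')" using assms(3) unfolding pi_le_def by auto
    show "h (Some P) = 1" unfolding h_def boolean_forest_def by simp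
    fix y assume y: "y \<in> pi_carrier n" "pi_le (Some P) y" "pi_le y (Some P')" "y \<noteq> Some P"
    then obtain R where R: "y = Some R" "priority_forest n R" "P \<subset> R"
      unfolding pi_carrier_def pi_le_def by (auto split: option.splits)
    have "(\<Sum>z \<in> {z \<in> pi_carrier n. pi_le (Some P) z \<and> pi_le z y}. h z)
      = (\<Sum>R' \<in> {R'. priority_forest n R' \<and> P \<subseteq> R' \<and> R' \<subseteq> R}.
          if boolean_forest n P R' then (-1) ^ (rank R' - rank P) else 0)"
      unfolding R(1) pi_carrier_interval by (simp add: sum.reindex h_def)
    also have "\<dots> = 0" using sum_boolean_forests_between[OF assms(1) R(2,3)] .
    finally show "(\<Sum>z \<in> {z \<in> pi_carrier n. pi_le (Some P) z \<and> pi_le z y}. h z) = 0" .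
  qed
  then show ?thesis unfolding h_def by simp
qed

end
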